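(* Let $P$ be a finite path producible by a tile assembly system $\mathcal T=(T,\sigma,1)$ such that the last tile of $P$ is the unique easternmost tile of $\sigma\cup\mathrm{asm}(P)$. Then either (a) all glues of $P$ that are visible from the north point east, or (b) all glues of $P$ that are visible from the south point east.
   Context: aTAM at temperature 1: $T$ finite set of tile types; tiles $((x,y),t)\in\mathbb Z^2\times T$; adjacent tiles interact if abutting glues have equal type and strength $\ge1$; $\mathcal T=(T,\sigma,1)$ with finite connected seed $\sigma$; producible assemblies grow from $\sigma$ by single tile additions interacting with an existing tile. A path is a sequence $P=P_0P_1\dots$ of tiles with pairwise distinct positions, consecutive ones adjacent and interacting; $\mathrm{asm}(P)$ is the set of its tiles. $P$ is producible if its tiles avoid the positions of $\sigma$, $\sigma\cup\mathrm{asm}(P)$ is producible, and $P_0$ interacts with a tile of $\sigma$. "Easternmost" means largest $x$-coordinate. $\mathrm{glue}_P(a)$ ($0\le a\le|P|-2$) is the glue between $P_a,P_{a+1}$, with position the midpoint of the segment $\mathrm{pos}(P_a)\mathrm{pos}(P_{a+1})$ and direction east/west/north/south according to $\mathrm{pos}(P_{a+1})-\mathrm{pos}(P_a)$ being $(1,0),(-1,0),(0,1),(0,-1)$. $\mathrm{emb}(P)$ is the polygonal curve through the positions of $P$. A glue pointing east or west is visible from the south (resp. north) if the vertical ray from its position downward (resp. upward) meets neither $\mathrm{emb}(P)$ nor $\sigma$ (tile positions or unit segments between adjacent positions of $\sigma$); only east- or west-pointing glues can be visible from the north or south. *)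

theory Defs
  imports "HOL-Analysis.Analysis"
begin

datatype dir = North | East | South | West

type_synonym pos = "int \<times> int"
type_synonym 'tt tile = "pos \<times> 'tt"

fun opp :: "dir \<Rightarrow> dir" where
  "opp North = South" | "opp South = North" | "opp East = West" | "opp West = East"

definition adjacent :: "pos \<Rightarrow> pos \<Rightarrow> bool" where
  "adjacent p q \<longleftrightarrow> \<bar>fst q - fst p\<bar> + \<bar>snd q - snd p\<bar> = 1"

text \<open>Direction of the unit vector q - p (meaningful for adjacent positions).\<close>
definition dir_of :: "pos \<Rightarrow> pos \<Rightarrow> dir" where
  "dir_of p q = (if fst q - fst p = 1 then East
                 else if fst q - fst p = -1 then West
                 else if snd q - snd p = 1 then North else South)"

definition interacts ::
  "('tt \<Rightarrow> dir \<Rightarrow> 'g) \<Rightarrow> ('g \<Rightarrow> nat) \<Rightarrow> 'tt tile \<Rightarrow> 'tt tile \<Rightarrow> bool" where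
  "interacts glue str a b \<longleftrightarrow>
     adjacent (fst a) (fst b) \<and>
     glue (snd a) (dir_of (fst a) (fst b)) = glue (snd b) (opp (dir_of (fst a) (fst b))) \<and>
     str (glue (snd a) (dir_of (fst a) (fst b))) \<ge> 1"

definition is_assembly :: "'tt tile set \<Rightarrow> bool" where
  "is_assembly A \<longleftrightarrow> (\<forall>a\<in>A. \<forall>b\<in>A. fst a = fst b \<longrightarrow> a = b)"

definition grid_connected :: "pos set \<Rightarrow> bool" where
  "grid_connected S \<longleftrightarrow>
     (\<forall>p\<in>S. \<forall>q\<in>S. (\<lambda>a b. a \<in> S \<and> b \<in> S \<and> adjacent a b)\<^sup>*\<^sup>* p q)"

definition valid_tas ::
  "'tt set \<Rightarrow> 'tt tile set \<Rightarrow> bool" where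
  "valid_tas T \<sigma> \<longleftrightarrow> finite T \<and> finite \<sigma> \<and> \<sigma> \<noteq> {} \<and> is_assembly \<sigma> \<and>
     snd ` \<sigma> \<subseteq> T \<and> grid_connected (fst ` \<sigma>)"

inductive producible ::
  "'tt set \<Rightarrow> ('tt \<Rightarrow> dir \<Rightarrow> 'g) \<Rightarrow> ('g \<Rightarrow> nat) \<Rightarrow> 'tt tile set \<Rightarrow> 'tt tile set \<Rightarrow> bool"
  for T glue str \<sigma> where
  seed: "producible T glue str \<sigma> \<sigma>"
| step: "producible T glue str \<sigma> A \<Longrightarrow> t \<in> T \<Longrightarrow> p \<notin> fst ` A \<Longrightarrow>
         (\<exists>b\<in>A. interacts glue str (p, t) b) \<Longrightarrow>
         producible T glue str \<sigma> (insert (p, t) A)"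

definition is_path ::
  "('tt \<Rightarrow> dir \<Rightarrow> 'g) \<Rightarrow> ('g \<Rightarrow> nat) \<Rightarrow> 'tt tile list \<Rightarrow> bool" where
  "is_path glue str P \<longleftrightarrow> distinct (map fst P) \<and>
     (\<forall>i. Suc i < length P \<longrightarrow> interacts glue str (P ! i) (P ! Suc i))"

text \<open>interacts implies adjacency, so consecutive tiles are adjacent.\<close>

definition producible_path ::
  "'tt set \<Rightarrow> ('tt \<Rightarrow> dir \<Rightarrow> 'g) \<Rightarrow> ('g \<Rightarrow> nat) \<Rightarrow> 'tt tile set \<Rightarrow> 'tt tile list \<Rightarrow> bool" where
  "producible_path T glue str \<sigma> P \<longleftrightarrow>
     P \<noteq> [] \<and> is_path glue str P \<and>
     fst ` set P \<inter> fst ` \<sigma> = {} \<and>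
     producible T glue str \<sigma> (\<sigma> \<union> set P) \<and>
     (\<exists>s\<in>\<sigma>. interacts glue str (hd P) s)"

definition rpos :: "pos \<Rightarrow> real \<times> real" where
  "rpos p = (real_of_int (fst p), real_of_int (snd p))"

definition emb :: "'tt tile list \<Rightarrow> (real \<times> real) set" where
  "emb P = rpos ` fst ` set P \<union>
     (\<Union>i\<in>{i. Suc i < length P}. closed_segment (rpos (fst (P ! i))) (rpos (fst (P ! Suc i))))"

definition seed_geom :: "'tt tile set \<Rightarrow> (real \<times> real) set" where
  "seed_geom \<sigma> = rpos ` fst ` \<sigma> \<union>
     \<Union>{closed_segment (rpos p) (rpos q) | p q. p \<in> fst ` \<sigma> \<and> q \<in> fst ` \<sigma> \<and> adjacent p q}"

definition glue_dir :: "'tt tile list \<Rightarrow> nat \<Rightarrow> dir" where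
  "glue_dir P a = dir_of (fst (P ! a)) (fst (P ! Suc a))"

definition glue_pos :: "'tt tile list \<Rightarrow> nat \<Rightarrow> real \<times> real" where
  "glue_pos P a = midpoint (rpos (fst (P ! a))) (rpos (fst (P ! Suc a)))"

definition visible_north :: "'tt tile set \<Rightarrow> 'tt tile list \<Rightarrow> nat \<Rightarrow> bool" where
  "visible_north \<sigma> P a \<longleftrightarrow> Suc a < length P \<and> glue_dir P a \<in> {East, West} \<and>
     (\<forall>s::real. s > 0 \<longrightarrow>
        (fst (glue_pos P a), snd (glue_pos P a) + s) \<notin> emb P \<union> seed_geom \<sigma>)"

definition visible_south :: "'tt tile set \<Rightarrow> 'tt tile list \<Rightarrow> nat \<Rightarrow> bool" where
  "visible_south \<sigma> P a \<longleftrightarrow> Suc a < length P \<and> glue_dir P a \<in> {East, West} \<and>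
     (\<forall>s::real. s > 0 \<longrightarrow>
        (fst (glue_pos P a), snd (glue_pos P a) - s) \<notin> emb P \<union> seed_geom \<sigma>)"

end

theory Submission
  imports Defs
begin

text \<open>Suppose glue a points west and is visible from the north, while glue b points west and is
  visible from the south; reflecting in the x-axis we may assume b \<le> a. Scale the half-integer
  lattice by 2, so that tiles and glues of P become lattice points of one walk. The part of this walk
  from glue a to the end, closed up by the vertical ray above glue a and by the half-plane east of the
  last tile, separates the plane, and the parity of the number of its horizontal steps crossed by a
  downward vertical ray is constant on each side. Just below glue b that number is 0 by visibility
  from the south. Just below glue a it is odd: the walk starts west of the ray and ends east of it,
  and visibility from the north forbids crossings above. But the two points are joined by a walk that
  follows P from tile b to tile a, which avoids the separating curve because P is self-avoiding.\<close>

subsection \<open>Parity of crossings of a lattice walk\<close>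

text \<open>For a walk of unit steps, the horizontal steps between the columns x and x + 1 at a height
  satisfying H, i.e. the crossings of the vertical line through x + 1/2.\<close>
definition crossings :: "int \<Rightarrow> (int \<Rightarrow> bool) \<Rightarrow> pos list \<Rightarrow> nat" where
  "crossings x H w = length (filter
     (\<lambda>(u, v). snd u = snd v \<and> min (fst u) (fst v) = x \<and> fst u \<noteq> fst v \<and> H (snd u))
     (zip w (tl w)))"

definition side_changes :: "'a set \<Rightarrow> 'a list \<Rightarrow> nat" where
  "side_changes V w = length (filter (\<lambda>(u, v). (u \<in> V) \<noteq> (v \<in> V)) (zip w (tl w)))"

lemma odd_side_changes_iff:
  "w \<noteq> [] \<Longrightarrow> odd (side_changes V w) \<longleftrightarrow> (hd w \<in> V) \<noteq> (last w \<in> V)"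
proof (induction w)
  case (Cons x xs)
  then show ?case
    by (cases xs) (auto simp: side_changes_def)
qed simp

lemma length_filter_add_length_filter:
  assumes "\<forall>z\<in>set xs. of_bool (P z) + of_bool (Q z) = (of_bool (R z) :: nat)"
  shows "length (filter P xs) + length (filter Q xs) = length (filter R xs)"
  using assms by (induction xs) (auto simp: of_bool_def split: if_splits)

lemma zip_tl_memD:
  "(u, v) \<in> set (zip w (tl w)) \<Longrightarrow> u \<in> set w \<and> v \<in> set w"
  by (induction w rule: induct_list012) auto

lemma successively_zip_tlD:
  "successively R w \<Longrightarrow> (u, v) \<in> set (zip w (tl w)) \<Longrightarrow> R u v"
  by (induction w rule: induct_list012) auto

lemma successively_drop: "successively P xs \<Longrightarrow> successively P (drop k xs)"
  using successively_append_iff[of P "take k xs" "drop k xs"] by simp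

lemma even_crossings_column_pair:
  assumes walk: "successively adjacent Q" and "Q \<noteq> []"
    and "(x + 1, y) \<notin> set Q" and "x + 1 < fst (last Q)"
    and "\<not> (x + 1 = fst (hd Q) \<and> snd (hd Q) < y)"
  shows "even (crossings x (\<lambda>h. h < y) Q + crossings (x + 1) (\<lambda>h. h < y) Q)"
proof -
  \<comment> \<open>Both counts together are the number of times Q enters or leaves the half-line below
    (x + 1, y), and Q starts and ends off that half-line.\<close>
  let ?V = "{p. fst p = x + 1 \<and> snd p < y}"
  have "crossings x (\<lambda>h. h < y) Q + crossings (x + 1) (\<lambda>h. h < y) Q = side_changes ?V Q"
    unfolding crossings_def side_changes_def
  proof (intro length_filter_add_length_filter ballI)
    fix z assume z: "z \<in> set (zip Q (tl Q))"
    obtain u v where uv: "z = (u, v)" by (cases z)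
    have "adjacent u v"
      using successively_zip_tlD[OF walk] z uv by simp
    moreover have "u \<noteq> (x + 1, y)" "v \<noteq> (x + 1, y)"
      using zip_tl_memD[of u v Q] z uv assms(3) by auto
    ultimately show "of_bool (case z of (u, v) \<Rightarrow> snd u = snd v \<and> min (fst u) (fst v) = x \<and> fst u \<noteq> fst v \<and> snd u < y)
      + of_bool (case z of (u, v) \<Rightarrow> snd u = snd v \<and> min (fst u) (fst v) = x + 1 \<and> fst u \<noteq> fst v \<and> snd u < y)
      = (of_bool (case z of (u, v) \<Rightarrow> (u \<in> ?V) \<noteq> (v \<in> ?V)) :: nat)"
      unfolding uv by (cases u; cases v) (auto simp: adjacent_def abs_if of_bool_def split: if_splits)
  qed
  moreover have "even (side_changes ?V Q)"
    using odd_side_changes_iff[OF \<open>Q \<noteq> []\<close>, of ?V] assms(4,5) by auto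
  ultimately show ?thesis by simp
qed

lemma crossings_below_succ:
  assumes "(x, y) \<notin> set Q"
  shows "crossings x (\<lambda>h. h < y + 1) Q = crossings x (\<lambda>h. h < y) Q"
  unfolding crossings_def
proof (intro arg_cong[where f = length] filter_cong refl)
  fix z assume z: "z \<in> set (zip Q (tl Q))"
  obtain u v where uv: "z = (u, v)" by (cases z)
  have "u \<noteq> (x, y)" "v \<noteq> (x, y)"
    using zip_tl_memD[of u v Q] z uv assms by auto
  then show "(case z of (u, v) \<Rightarrow> snd u = snd v \<and> min (fst u) (fst v) = x \<and> fst u \<noteq> fst v \<and> snd u < y + 1)
    = (case z of (u, v) \<Rightarrow> snd u = snd v \<and> min (fst u) (fst v) = x \<and> fst u \<noteq> fst v \<and> snd u < y)"
    unfolding uv by (cases u; cases v) (auto simp: min_def split: if_splits)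
qed

lemma crossings_above_add_below:
  assumes walk: "successively adjacent Q" and "(x, y) \<notin> set Q"
  shows "crossings x (\<lambda>h. y < h) Q + crossings x (\<lambda>h. h < y) Q = side_changes {p. fst p \<le> x} Q"
  unfolding crossings_def side_changes_def
proof (intro length_filter_add_length_filter ballI)
  fix z assume z: "z \<in> set (zip Q (tl Q))"
  obtain u v where uv: "z = (u, v)" by (cases z)
  have "adjacent u v"
    using successively_zip_tlD[OF walk] z uv by simp
  moreover have "u \<noteq> (x, y)" "v \<noteq> (x, y)"
    using zip_tl_memD[of u v Q] z uv assms(2) by auto
  ultimately show "of_bool (case z of (u, v) \<Rightarrow> snd u = snd v \<and> min (fst u) (fst v) = x \<and> fst u \<noteq> fst v \<and> y < snd u)
      + of_bool (case z of (u, v) \<Rightarrow> snd u = snd v \<and> min (fst u) (fst v) = x \<and> fst u \<noteq> fst v \<and> snd u < y)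
      = (of_bool (case z of (u, v) \<Rightarrow> (u \<in> {p. fst p \<le> x}) \<noteq> (v \<in> {p. fst p \<le> x})) :: nat)"
    unfolding uv by (cases u; cases v) (auto simp: adjacent_def abs_if min_def of_bool_def split: if_splits)
qed

lemma crossings_eq_0I:
  assumes "\<And>u v. (u, v) \<in> set (zip w (tl w)) \<Longrightarrow> snd u = snd v \<Longrightarrow>
             min (fst u) (fst v) = x \<Longrightarrow> fst u \<noteq> fst v \<Longrightarrow> \<not> H (snd u)"
  shows "crossings x H w = 0"
  using assms unfolding crossings_def by (auto simp: filter_empty_conv)

text \<open>Crossings of Q by the downward vertical ray from the point half a unit east of z.\<close>
definition ray_crossings :: "pos list \<Rightarrow> pos \<Rightarrow> nat" where
  "ray_crossings Q z = crossings (fst z) (\<lambda>h. h < snd z) Q"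

text \<open>Q, closed up by the upward vertical ray from its first point and by the half-plane
  east of its last point, is a closed curve; the admissible points are those off this curve.\<close>
definition admissible :: "pos list \<Rightarrow> pos \<Rightarrow> bool" where
  "admissible Q z \<longleftrightarrow>
     z \<notin> set Q \<and> fst z < fst (last Q) \<and> \<not> (fst z = fst (hd Q) \<and> snd (hd Q) < snd z)"

lemma even_ray_crossings_adjacent:
  assumes walk: "successively adjacent Q" and "Q \<noteq> []"
    and "admissible Q z" and "admissible Q z'" and "adjacent z z'"
  shows "even (ray_crossings Q z) \<longleftrightarrow> even (ray_crossings Q z')"
proof -
  have east: "even (ray_crossings Q p) \<longleftrightarrow> even (ray_crossings Q q)"
    if "admissible Q q" "q = (fst p + 1, snd p)" for p q
    using even_crossings_column_pair[OF walk \<open>Q \<noteq> []\<close>, of "fst p" "snd p"] that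
    by (auto simp: admissible_def ray_crossings_def)
  have north: "even (ray_crossings Q p) \<longleftrightarrow> even (ray_crossings Q q)"
    if "admissible Q p" "q = (fst p, snd p + 1)" for p q
    using crossings_below_succ[of "fst p" "snd p" Q] that
    by (auto simp: admissible_def ray_crossings_def)
  have "z' = (fst z + 1, snd z) \<or> z = (fst z' + 1, snd z') \<or>
        z' = (fst z, snd z + 1) \<or> z = (fst z', snd z' + 1)"
    using \<open>adjacent z z'\<close> by (cases z; cases z') (auto simp: adjacent_def abs_if split: if_splits)
  then show ?thesis
    using east[of z z'] east[of z' z] north[of z z'] north[of z' z] assms(3,4) by blast
qed

lemma even_ray_crossings_hd_last:
  assumes "successively adjacent Q" and "Q \<noteq> []"
  shows "R \<noteq> [] \<Longrightarrow> successively adjacent R \<Longrightarrow> \<forall>z\<in>set R. admissible Q z \<Longrightarrow>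
     even (ray_crossings Q (hd R)) \<longleftrightarrow> even (ray_crossings Q (last R))"
proof (induction R rule: induct_list012)
  case (3 r r' rs)
  then show ?case
    using even_ray_crossings_adjacent[OF assms, of r r'] by simp
qed simp_all

subsection \<open>Refined lattice paths\<close>

text \<open>A lattice path in the lattice of half-integer points, scaled by 2: each vertex p becomes
  p + p and each step from p to q contributes its midpoint p + q.\<close>
fun refine :: "pos list \<Rightarrow> pos list" where
  "refine [] = []"
| "refine [p] = [p + p]"
| "refine (p # q # r) = (p + p) # (p + q) # refine (q # r)"

lemma refine_eq_Nil_iff [simp]: "refine ps = [] \<longleftrightarrow> ps = []"
  by (induction ps rule: refine.induct) auto

lemma hd_refine [simp]: "ps \<noteq> [] \<Longrightarrow> hd (refine ps) = hd ps + hd ps"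
  by (induction ps rule: refine.induct) auto

lemma last_refine [simp]: "ps \<noteq> [] \<Longrightarrow> last (refine ps) = last ps + last ps"
  by (induction ps rule: refine.induct) auto

lemma adjacent_double_sum: "adjacent p q \<Longrightarrow> adjacent (p + p) (p + q) \<and> adjacent (p + q) (q + q)"
  by (cases p; cases q) (auto simp: adjacent_def abs_if split: if_splits)

lemma successively_adjacent_refine:
  "successively adjacent ps \<Longrightarrow> successively adjacent (refine ps)"
proof (induction ps rule: refine.induct)
  case (3 p q r)
  then have "adjacent p q" "successively adjacent (refine (q # r))"
    by simp_all
  then show ?case
    using adjacent_double_sum[of p q] by (simp add: successively_Cons del: successively.simps)
qed auto

lemma in_set_refine_iff:
  "z \<in> set (refine ps) \<longleftrightarrow>
     (\<exists>i < length ps. z = ps ! i + ps ! i) \<or> (\<exists>i. Suc i < length ps \<and> z = ps ! i + ps ! Suc i)"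
proof (induction ps rule: refine.induct)
  case (3 p q r)
  have "(\<exists>i < length (p # q # r). z = (p # q # r) ! i + (p # q # r) ! i) \<longleftrightarrow>
        z = p + p \<or> (\<exists>i < length (q # r). z = (q # r) ! i + (q # r) ! i)"
    by (simp only: length_Cons Ex_less_Suc2 nth_Cons_0 nth_Cons_Suc)
  moreover have "(\<exists>i. Suc i < length (p # q # r) \<and> z = (p # q # r) ! i + (p # q # r) ! Suc i) \<longleftrightarrow>
        z = p + q \<or> (\<exists>i. Suc i < length (q # r) \<and> z = (q # r) ! i + (q # r) ! Suc i)"
  proof
    assume "\<exists>i. Suc i < length (p # q # r) \<and> z = (p # q # r) ! i + (p # q # r) ! Suc i"
    then obtain i where "Suc i < length (p # q # r)" "z = (p # q # r) ! i + (p # q # r) ! Suc i"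
      by blast
    then show "z = p + q \<or> (\<exists>i. Suc i < length (q # r) \<and> z = (q # r) ! i + (q # r) ! Suc i)"
      by (cases i) auto
  next
    assume "z = p + q \<or> (\<exists>i. Suc i < length (q # r) \<and> z = (q # r) ! i + (q # r) ! Suc i)"
    then show "\<exists>i. Suc i < length (p # q # r) \<and> z = (p # q # r) ! i + (p # q # r) ! Suc i"
      by (metis Suc_less_eq length_Cons nth_Cons_0 nth_Cons_Suc zero_less_Suc)
  qed
  ultimately show ?case
    using "3.IH" by (simp only: refine.simps list.set insert_iff) blast
qed simp_all

lemma in_set_refine_slice:
  assumes "k \<le> m" and "m < length ps"
  shows "z \<in> set (refine (take (Suc m - k) (drop k ps))) \<longleftrightarrow>
     (\<exists>i. k \<le> i \<and> i \<le> m \<and> z = ps ! i + ps ! i) \<or> (\<exists>i. k \<le> i \<and> i < m \<and> z = ps ! i + ps ! Suc i)"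
    (is "_ \<longleftrightarrow> ?vertex \<or> ?edge")
proof -
  let ?M = "take (Suc m - k) (drop k ps)"
  have len: "length ?M = Suc m - k" and nth: "\<And>i. i < length ?M \<Longrightarrow> ?M ! i = ps ! (k + i)"
    using assms by auto
  have "(\<exists>i < length ?M. z = ?M ! i + ?M ! i) \<longleftrightarrow> ?vertex"
  proof
    assume "\<exists>i < length ?M. z = ?M ! i + ?M ! i"
    then obtain i where "i < length ?M" "z = ?M ! i + ?M ! i" by blast
    then show ?vertex
      using len nth by (intro exI[of _ "k + i"]) auto
  next
    assume ?vertex
    then obtain i where "k \<le> i" "i \<le> m" "z = ps ! i + ps ! i" by blast
    then show "\<exists>i < length ?M. z = ?M ! i + ?M ! i"
      using len nth by (intro exI[of _ "i - k"]) auto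
  qed
  moreover have "(\<exists>i. Suc i < length ?M \<and> z = ?M ! i + ?M ! Suc i) \<longleftrightarrow> ?edge"
  proof
    assume "\<exists>i. Suc i < length ?M \<and> z = ?M ! i + ?M ! Suc i"
    then obtain i where "Suc i < length ?M" "z = ?M ! i + ?M ! Suc i" by blast
    then show ?edge
      using len nth[of i] nth[of "Suc i"] by (intro exI[of _ "k + i"]) auto
  next
    assume ?edge
    then obtain i where "k \<le> i" "i < m" "z = ps ! i + ps ! Suc i" by blast
    then show "\<exists>i. Suc i < length ?M \<and> z = ?M ! i + ?M ! Suc i"
      using len nth[of "i - k"] nth[of "Suc (i - k)"] by (intro exI[of _ "i - k"]) auto
  qed
  ultimately show ?thesis
    by (simp only: in_set_refine_iff)
qed

definition reflect_y :: "pos \<Rightarrow> pos" where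
  "reflect_y p = (fst p, - snd p)"

lemma refine_map_reflect_y: "refine (map reflect_y ps) = map reflect_y (refine ps)"
  by (induction ps rule: refine.induct) (auto simp: reflect_y_def)

lemma adjacent_sum_eqD:
  assumes "adjacent p q" "adjacent p' q'" "p + q = p' + q'"
  shows "(p = p' \<and> q = q') \<or> (p = q' \<and> q = p')"
  using assms by (cases p; cases q; cases p'; cases q')
    (auto simp: adjacent_def abs_if split: if_splits; presburger)

lemma adjacent_sum_neq_double: "adjacent p q \<Longrightarrow> p + q \<noteq> r + r"
  by (cases p; cases q; cases r) (auto simp: adjacent_def abs_if split: if_splits; presburger)

lemma adjacent_sum_neq_odd: "adjacent p q \<Longrightarrow> p + q \<noteq> (2 * x - 1, 2 * y - 1)"
  by (cases p; cases q) (auto simp: adjacent_def abs_if split: if_splits; presburger)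

lemma double_odd_neq: "(p :: pos) + p \<noteq> (2 * x - 1, y) \<and> p + p \<noteq> (x, 2 * y - 1)"
  by (cases p) (auto; presburger)

lemma double_eq_double_iff [simp]: "(p :: pos) + p = q + q \<longleftrightarrow> p = q"
  by (cases p; cases q) auto

lemma edge_sum_inj:
  assumes "distinct ps" "successively adjacent ps" "Suc i < length ps" "Suc j < length ps"
    and "ps ! i + ps ! Suc i = ps ! j + ps ! Suc j"
  shows "i = j"
proof -
  have "(ps ! i = ps ! j \<and> ps ! Suc i = ps ! Suc j) \<or> (ps ! i = ps ! Suc j \<and> ps ! Suc i = ps ! j)"
    using adjacent_sum_eqD successively_nth assms by metis
  then show ?thesis
    using assms(1,3,4) by (auto simp: nth_eq_iff_index_eq)
qed

lemma odd_point_notin_refine: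
  "successively adjacent ps \<Longrightarrow> (2 * x - 1, 2 * y - 1) \<notin> set (refine ps)"
  unfolding in_set_refine_iff
  using adjacent_sum_neq_odd successively_nth double_odd_neq by metis

subsection \<open>Two west glues visible from opposite sides\<close>

text \<open>In refined coordinates: the steps a and b of ps go west, the glue midpoint of step a sees
  nothing of the path above it (north_a) and that of step b nothing below it (south_b).\<close>
locale west_glue_pair =
  fixes ps :: "pos list" and a b :: nat
  assumes distinct_ps: "distinct ps"
    and walk_ps: "successively adjacent ps"
    and east_end: "\<And>j. Suc j < length ps \<Longrightarrow> fst (ps ! j) < fst (last ps)"
    and a_less: "Suc a < length ps" and b_le_a: "b \<le> a"
    and west_a: "ps ! Suc a = (fst (ps ! a) - 1, snd (ps ! a))"
    and west_b: "ps ! Suc b = (fst (ps ! b) - 1, snd (ps ! b))"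
    and north_a: "\<And>z. z \<in> set (refine ps) \<Longrightarrow> fst z = fst (ps ! a + ps ! Suc a) \<Longrightarrow>
                       snd z \<le> snd (ps ! a + ps ! Suc a)"
    and south_b: "\<And>z. z \<in> set (refine ps) \<Longrightarrow> fst z = fst (ps ! b + ps ! Suc b) \<Longrightarrow>
                       snd (ps ! b + ps ! Suc b) \<le> snd z"
begin

lemma glue_a_eq: "ps ! a + ps ! Suc a = (2 * fst (ps ! a) - 1, 2 * snd (ps ! a))"
  by (cases "ps ! a") (simp add: west_a)

lemma glue_b_eq: "ps ! b + ps ! Suc b = (2 * fst (ps ! b) - 1, 2 * snd (ps ! b))"
  by (cases "ps ! b") (simp add: west_b)

lemma adjacent_nth: "Suc i < length ps \<Longrightarrow> adjacent (ps ! i) (ps ! Suc i)"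
  using walk_ps successively_nth by blast

lemma east_of_glues: "j \<le> a \<Longrightarrow> fst (ps ! j) < fst (last ps)"
  using a_less east_end[of j] by simp

definition tail :: "pos list" where
  "tail = (ps ! a + ps ! Suc a) # refine (drop (Suc a) ps)"

lemma tail_not_Nil: "tail \<noteq> []"
  by (simp add: tail_def)

lemma hd_tail: "hd tail = (2 * fst (ps ! a) - 1, 2 * snd (ps ! a))"
  by (simp add: tail_def glue_a_eq)

lemma last_tail: "last tail = last ps + last ps"
  using a_less by (simp add: tail_def)

lemma walk_tail: "successively adjacent tail"
  using a_less adjacent_double_sum[OF adjacent_nth[OF a_less]] successively_drop[OF walk_ps]
  by (simp add: tail_def successively_Cons hd_drop_conv_nth successively_adjacent_refine)

lemma in_set_tail_iff:
  "z \<in> set tail \<longleftrightarrow> (\<exists>i. a < i \<and> i < length ps \<and> z = ps ! i + ps ! i)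
     \<or> (\<exists>i. a \<le> i \<and> Suc i < length ps \<and> z = ps ! i + ps ! Suc i)"
proof -
  have "drop (Suc a) ps = take (Suc (length ps - 1) - Suc a) (drop (Suc a) ps)"
    by simp
  then have "z \<in> set (refine (drop (Suc a) ps)) \<longleftrightarrow>
      (\<exists>i. Suc a \<le> i \<and> i \<le> length ps - 1 \<and> z = ps ! i + ps ! i)
      \<or> (\<exists>i. Suc a \<le> i \<and> i < length ps - 1 \<and> z = ps ! i + ps ! Suc i)"
    using in_set_refine_slice[of "Suc a" "length ps - 1" ps z] a_less by simp
  moreover have "\<And>i P. (Suc a \<le> i \<and> i \<le> length ps - 1 \<and> P) \<longleftrightarrow> (a < i \<and> i < length ps \<and> P)"
    "\<And>i P. (a \<le> i \<and> Suc i < length ps \<and> P) \<longleftrightarrow> (i = a \<and> P \<or> Suc a \<le> i \<and> i < length ps - 1 \<and> P)"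
    using a_less by auto
  ultimately show ?thesis
    unfolding tail_def by (simp only: list.set insert_iff ex_disj_distrib simp_thms) blast
qed

lemma set_tail_subset: "set tail \<subseteq> set (refine ps)"
  unfolding in_set_refine_iff in_set_tail_iff subset_iff by (metis Suc_lessD)

lemma odd_point_notin_tail: "(2 * x - 1, 2 * y - 1) \<notin> set tail"
  using set_tail_subset odd_point_notin_refine[OF walk_ps] by blast

lemma vertex_notin_tail:
  assumes "j \<le> a"
  shows "ps ! j + ps ! j \<notin> set tail"
  unfolding in_set_tail_iff
proof (intro notI, elim disjE exE conjE)
  fix i assume "a < i" "i < length ps" "ps ! j + ps ! j = ps ! i + ps ! i"
  then show False
    using assms a_less distinct_ps by (auto simp: nth_eq_iff_index_eq)
next
  fix i assume "Suc i < length ps" "ps ! j + ps ! j = ps ! i + ps ! Suc i"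
  then show False
    using adjacent_sum_neq_double[OF adjacent_nth] by metis
qed

lemma edge_notin_tail:
  assumes "j < a"
  shows "ps ! j + ps ! Suc j \<notin> set tail"
  unfolding in_set_tail_iff
proof (intro notI, elim disjE exE conjE)
  fix i assume "i < length ps" "ps ! j + ps ! Suc j = ps ! i + ps ! i"
  then show False
    using assms a_less adjacent_sum_neq_double[OF adjacent_nth, of j "ps ! i"] by simp
next
  fix i assume "a \<le> i" "Suc i < length ps" "ps ! j + ps ! Suc j = ps ! i + ps ! Suc i"
  then show False
    using assms a_less edge_sum_inj[OF distinct_ps walk_ps, of j i] by simp
qed

lemma below_vertex_notin_tail: "j \<le> a \<Longrightarrow> ps ! j + ps ! j - (0, 1) \<notin> set tail"
proof
  assume j: "j \<le> a" and "ps ! j + ps ! j - (0, 1) \<in> set tail"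
  then consider i where "a < i" "i < length ps" "ps ! j + ps ! j - (0, 1) = ps ! i + ps ! i"
    | i where "a \<le> i" "Suc i < length ps" "ps ! j + ps ! j - (0, 1) = ps ! i + ps ! Suc i"
    unfolding in_set_tail_iff by blast
  then show False
  proof cases
    case 1
    then show False
      using double_odd_neq[of "ps ! i" "2 * fst (ps ! j)" "snd (ps ! j)"]
      by (cases "ps ! j") simp
  next
    case 2
    have "adjacent (ps ! j) (ps ! j - (0, 1))"
      by (simp add: adjacent_def)
    moreover have "ps ! j + ps ! j - (0, 1) = ps ! j + (ps ! j - (0, 1))"
      by simp
    ultimately have "ps ! j = ps ! i \<and> ps ! Suc i = ps ! j - (0, 1) \<or> ps ! j = ps ! Suc i"
      using adjacent_sum_eqD[OF _ adjacent_nth[OF 2(2)]] 2(3) by metis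
    then have "i = a \<and> j = a \<and> ps ! Suc a = ps ! a - (0, 1)"
      using 2 j distinct_ps by (auto simp: nth_eq_iff_index_eq)
    then show False
      using west_a by (cases "ps ! a") simp
  qed
qed

text \<open>From just below glue b up to tile b, along the path to tile a, and down to just below
  glue a. Self-avoidance of the path keeps it off the tail.\<close>
definition detour :: "pos list" where
  "detour = [ps ! b + ps ! Suc b - (0, 1), ps ! b + ps ! b - (0, 1)]
     @ refine (take (Suc a - b) (drop b ps))
     @ [ps ! a + ps ! a - (0, 1), ps ! a + ps ! Suc a - (0, 1)]"

lemma in_set_detour_middle_iff:
  "z \<in> set (refine (take (Suc a - b) (drop b ps))) \<longleftrightarrow>
     (\<exists>j. b \<le> j \<and> j \<le> a \<and> z = ps ! j + ps ! j) \<or> (\<exists>j. b \<le> j \<and> j < a \<and> z = ps ! j + ps ! Suc j)"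
  using in_set_refine_slice[OF b_le_a] a_less by simp

lemma walk_detour: "successively adjacent detour"
proof -
  define M where "M = take (Suc a - b) (drop b ps)"
  have "M \<noteq> []" "hd M = ps ! b" "last M = ps ! a"
    using a_less b_le_a by (auto simp: M_def hd_drop_conv_nth last_conv_nth min_def)
  moreover have "successively adjacent M"
    using successively_drop[OF walk_ps, of b] successively_append_iff[of adjacent M]
    unfolding M_def by (metis append_take_drop_id)
  ultimately have M: "successively adjacent (refine M)" "refine M \<noteq> []"
    "hd (refine M) = ps ! b + ps ! b" "last (refine M) = ps ! a + ps ! a"
    by (simp_all add: successively_adjacent_refine)
  have "adjacent (ps ! b + ps ! Suc b - (0, 1)) (ps ! b + ps ! b - (0, 1))"
    "adjacent (ps ! b + ps ! b - (0, 1)) (ps ! b + ps ! b)"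
    "adjacent (ps ! a + ps ! a) (ps ! a + ps ! a - (0, 1))"
    "adjacent (ps ! a + ps ! a - (0, 1)) (ps ! a + ps ! Suc a - (0, 1))"
    unfolding glue_a_eq glue_b_eq by (cases "ps ! a"; cases "ps ! b"; simp add: adjacent_def)+
  with M show ?thesis
    unfolding detour_def M_def[symmetric] by (simp add: successively_append_iff successively_Cons)
qed

lemma hd_detour: "hd detour = (2 * fst (ps ! b) - 1, 2 * snd (ps ! b) - 1)"
  by (simp add: detour_def glue_b_eq)

lemma last_detour: "last detour = (2 * fst (ps ! a) - 1, 2 * snd (ps ! a) - 1)"
  by (simp add: detour_def glue_a_eq)

lemma not_above_hd_tail:
  "z \<in> set (refine ps) \<Longrightarrow> \<not> (fst z = fst (hd tail) \<and> snd (hd tail) < snd z)"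
  using north_a by (fastforce simp: hd_tail glue_a_eq)

lemma admissible_tail_iff:
  "admissible tail z \<longleftrightarrow> z \<notin> set tail \<and> fst z < 2 * fst (last ps) \<and>
     \<not> (fst z = 2 * fst (ps ! a) - 1 \<and> 2 * snd (ps ! a) < snd z)"
  by (simp add: admissible_def hd_tail last_tail)

lemma admissible_tailI:
  assumes "z \<in> set (refine ps)" "z \<notin> set tail" "fst z < 2 * fst (last ps)"
  shows "admissible tail z"
  using assms not_above_hd_tail by (simp add: admissible_def last_tail)

lemma admissible_detour: "\<forall>z\<in>set detour. admissible tail z"
proof
  fix z assume "z \<in> set detour"
  then consider "z = ps ! b + ps ! Suc b - (0, 1)" | "z = ps ! b + ps ! b - (0, 1)"
    | j where "j \<le> a" "z = ps ! j + ps ! j" | j where "j < a" "z = ps ! j + ps ! Suc j"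
    | "z = ps ! a + ps ! a - (0, 1)" | "z = ps ! a + ps ! Suc a - (0, 1)"
    unfolding detour_def using in_set_detour_middle_iff by auto
  then show "admissible tail z"
  proof cases
    case 1
    have "ps ! b + ps ! Suc b \<in> set (refine ps)"
      unfolding in_set_refine_iff using a_less b_le_a by (intro disjI2 exI[of _ b]) simp
    from not_above_hd_tail[OF this]
    have "\<not> (fst (ps ! b) = fst (ps ! a) \<and> snd (ps ! a) < snd (ps ! b))"
      by (simp add: hd_tail glue_b_eq)
    then show ?thesis
      using 1 odd_point_notin_tail east_of_glues[OF b_le_a]
      by (auto simp: admissible_tail_iff glue_b_eq)
  next
    case 2
    then show ?thesis
      using below_vertex_notin_tail[OF b_le_a] east_of_glues[OF b_le_a]
      by (cases "ps ! b") (auto simp: admissible_tail_iff; presburger)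
  next
    case (3 j)
    have "z \<in> set (refine ps)"
      unfolding in_set_refine_iff using 3 a_less by (intro disjI1 exI[of _ j]) simp
    then show ?thesis
      using 3 vertex_notin_tail east_of_glues by (simp add: admissible_tailI)
  next
    case (4 j)
    have "z \<in> set (refine ps)"
      unfolding in_set_refine_iff using 4 a_less by (intro disjI2 exI[of _ j]) simp
    then show ?thesis
      using 4 edge_notin_tail east_of_glues[of j] east_of_glues[of "Suc j"] by (simp add: admissible_tailI)
  next
    case 5
    then show ?thesis
      using below_vertex_notin_tail[of a] east_of_glues[of a]
      by (cases "ps ! a") (auto simp: admissible_tail_iff; presburger)
  next
    case 6
    then show ?thesis
      using odd_point_notin_tail east_of_glues[of a]
      by (auto simp: admissible_tail_iff glue_a_eq)
  qed
qed

lemma ray_crossings_hd_detour: "ray_crossings tail (hd detour) = 0"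
  unfolding ray_crossings_def hd_detour
proof (rule crossings_eq_0I)
  fix u v assume uv: "(u, v) \<in> set (zip tail (tl tail))" "snd u = snd v"
    "min (fst u) (fst v) = fst (2 * fst (ps ! b) - 1, 2 * snd (ps ! b) - 1)"
  have "u \<in> set (refine ps)" "v \<in> set (refine ps)"
    using zip_tl_memD[OF uv(1)] set_tail_subset by auto
  moreover have "fst u = 2 * fst (ps ! b) - 1 \<or> fst v = 2 * fst (ps ! b) - 1"
    using uv(3) by (auto simp: min_def split: if_splits)
  ultimately have "2 * snd (ps ! b) \<le> snd u"
    using south_b[of u] south_b[of v] uv(2) unfolding glue_b_eq by auto
  then show "\<not> snd u < snd (2 * fst (ps ! b) - 1, 2 * snd (ps ! b) - 1)"
    by simp
qed

lemma odd_ray_crossings_last_detour: "odd (ray_crossings tail (last detour))"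
proof -
  let ?x = "2 * fst (ps ! a) - 1" and ?y = "2 * snd (ps ! a) - 1"
  \<comment> \<open>Above glue a only the step from glue a to tile a could cross, and tile a is not on the tail.\<close>
  have above: "crossings ?x (\<lambda>h. ?y < h) tail = 0"
  proof (rule crossings_eq_0I)
    fix u v assume uv: "(u, v) \<in> set (zip tail (tl tail))" "snd u = snd v"
      "min (fst u) (fst v) = ?x" "fst u \<noteq> fst v"
    have mem: "u \<in> set tail" "v \<in> set tail"
      using zip_tl_memD[OF uv(1)] by auto
    have "adjacent u v"
      using successively_zip_tlD[OF walk_tail uv(1)] .
    show "\<not> ?y < snd u"
    proof
      assume "?y < snd u"
      have "fst u = ?x \<or> fst v = ?x"
        using uv(3) by (auto simp: min_def split: if_splits)
      then have "snd u \<le> 2 * snd (ps ! a)"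
        using north_a[of u] north_a[of v] mem set_tail_subset uv(2) unfolding glue_a_eq by auto
      with \<open>?y < snd u\<close> have height: "snd u = 2 * snd (ps ! a)"
        by simp
      have "u = (?x + 1, snd u) \<or> v = (?x + 1, snd u)"
        using uv(2-4) \<open>adjacent u v\<close>
        by (cases u; cases v) (auto simp: adjacent_def min_def split: if_splits)
      moreover have "ps ! a + ps ! a = (?x + 1, 2 * snd (ps ! a))"
        by (cases "ps ! a") simp
      ultimately have "u = ps ! a + ps ! a \<or> v = ps ! a + ps ! a"
        using height by metis
      then show False
        using vertex_notin_tail[of a] mem by auto
    qed
  qed
  have "odd (side_changes {p. fst p \<le> ?x} tail)"
    using odd_side_changes_iff[OF tail_not_Nil, of "{p. fst p \<le> ?x}"] east_of_glues[of a]
    by (simp add: hd_tail last_tail)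
  then show ?thesis
    using crossings_above_add_below[OF walk_tail odd_point_notin_tail[of "fst (ps ! a)" "snd (ps ! a)"]] above
    by (simp add: ray_crossings_def last_detour)
qed

lemma contradiction: False
  using even_ray_crossings_hd_last[OF walk_tail _ _ walk_detour admissible_detour]
    ray_crossings_hd_detour odd_ray_crossings_last_detour tail_not_Nil
  by (simp add: detour_def)

end

lemma no_west_glues_visible_north_south:
  assumes distinct: "distinct ps" and walk: "successively adjacent ps"
    and east: "\<And>j. Suc j < length ps \<Longrightarrow> fst (ps ! j) < fst (last ps)"
    and a: "Suc a < length ps" and b: "Suc b < length ps"
    and west_a: "ps ! Suc a = (fst (ps ! a) - 1, snd (ps ! a))"
    and west_b: "ps ! Suc b = (fst (ps ! b) - 1, snd (ps ! b))"
    and north_a: "\<And>z. z \<in> set (refine ps) \<Longrightarrow> fst z = fst (ps ! a + ps ! Suc a) \<Longrightarrow>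
                       snd z \<le> snd (ps ! a + ps ! Suc a)"
    and south_b: "\<And>z. z \<in> set (refine ps) \<Longrightarrow> fst z = fst (ps ! b + ps ! Suc b) \<Longrightarrow>
                       snd (ps ! b + ps ! Suc b) \<le> snd z"
  shows False
proof (cases "b \<le> a")
  case True
  then show False
    using west_glue_pair.contradiction west_glue_pair.intro assms by metis
next
  case False
  \<comment> \<open>Reflecting in the x-axis exchanges north and south, and hence the roles of a and b.\<close>
  let ?rs = "map reflect_y ps"
  have "west_glue_pair ?rs b a"
  proof
    show "distinct ?rs"
      using distinct by (simp add: distinct_map inj_on_def reflect_y_def prod_eq_iff)
    show "successively adjacent ?rs"
      using walk by (simp add: successively_map adjacent_def reflect_y_def abs_minus_commute)
    show "fst (?rs ! j) < fst (last ?rs)" if "Suc j < length ?rs" for j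
      using east[of j] that by (cases ps rule: rev_cases) (auto simp: reflect_y_def nth_append)
    show "Suc b < length ?rs" "a \<le> b"
      using b False by simp_all
    show "?rs ! Suc a = (fst (?rs ! a) - 1, snd (?rs ! a))"
      "?rs ! Suc b = (fst (?rs ! b) - 1, snd (?rs ! b))"
      using west_a west_b a b by (simp_all add: reflect_y_def)
    show "snd z \<le> snd (?rs ! b + ?rs ! Suc b)"
      if "z \<in> set (refine ?rs)" "fst z = fst (?rs ! b + ?rs ! Suc b)" for z
      using that south_b[of "reflect_y z"] b
      by (auto simp: refine_map_reflect_y reflect_y_def)
    show "snd (?rs ! a + ?rs ! Suc a) \<le> snd z"
      if "z \<in> set (refine ?rs)" "fst z = fst (?rs ! a + ?rs ! Suc a)" for z
      using that north_a[of "reflect_y z"] a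
      by (auto simp: refine_map_reflect_y reflect_y_def)
  qed
  then show False
    by (rule west_glue_pair.contradiction)
qed

subsection \<open>Glues of tile paths\<close>

definition half_pos :: "pos \<Rightarrow> real \<times> real" where
  "half_pos z = (real_of_int (fst z) / 2, real_of_int (snd z) / 2)"

lemma glue_pos_eq: "glue_pos P a = half_pos (fst (P ! a) + fst (P ! Suc a))"
  by (simp add: glue_pos_def midpoint_def rpos_def half_pos_def add_divide_distrib)

lemma half_pos_refine_in_emb:
  assumes "z \<in> set (refine (map fst P))"
  shows "half_pos z \<in> emb P"
  using assms unfolding in_set_refine_iff
proof (elim disjE exE conjE)
  fix i assume "i < length (map fst P)" "z = map fst P ! i + map fst P ! i"
  then have "half_pos z \<in> rpos ` fst ` set P"
    by (auto simp: half_pos_def rpos_def)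
  then show ?thesis
    by (simp add: emb_def)
next
  fix i assume i: "Suc i < length (map fst P)" "z = map fst P ! i + map fst P ! Suc i"
  then have "half_pos z = midpoint (rpos (fst (P ! i))) (rpos (fst (P ! Suc i)))"
    by (simp add: glue_pos_eq[symmetric] glue_pos_def)
  then show ?thesis
    using i by (auto simp: emb_def)
qed

lemma visible_north_refine:
  assumes "visible_north \<sigma> P a" and "z \<in> set (refine (map fst P))"
    and "fst z = fst (fst (P ! a) + fst (P ! Suc a))"
  shows "snd z \<le> snd (fst (P ! a) + fst (P ! Suc a))"
proof (rule ccontr)
  let ?g = "fst (P ! a) + fst (P ! Suc a)"
  assume "\<not> ?thesis"
  then have "(real_of_int (snd z) - real_of_int (snd ?g)) / 2 > 0"
    by simp
  moreover have "half_pos z = (fst (glue_pos P a),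
      snd (glue_pos P a) + (real_of_int (snd z) - real_of_int (snd ?g)) / 2)"
    using assms(3) by (simp add: glue_pos_eq half_pos_def diff_divide_distrib)
  moreover have "\<forall>s > 0. (fst (glue_pos P a), snd (glue_pos P a) + s) \<notin> emb P"
    using assms(1) by (simp add: visible_north_def)
  ultimately show False
    using half_pos_refine_in_emb[OF assms(2)] by metis
qed

lemma visible_south_refine:
  assumes "visible_south \<sigma> P a" and "z \<in> set (refine (map fst P))"
    and "fst z = fst (fst (P ! a) + fst (P ! Suc a))"
  shows "snd (fst (P ! a) + fst (P ! Suc a)) \<le> snd z"
proof (rule ccontr)
  let ?g = "fst (P ! a) + fst (P ! Suc a)"
  assume "\<not> ?thesis"
  then have "(real_of_int (snd ?g) - real_of_int (snd z)) / 2 > 0"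
    by simp
  moreover have "half_pos z = (fst (glue_pos P a),
      snd (glue_pos P a) - (real_of_int (snd ?g) - real_of_int (snd z)) / 2)"
    using assms(3) by (simp add: glue_pos_eq half_pos_def diff_divide_distrib)
  moreover have "\<forall>s > 0. (fst (glue_pos P a), snd (glue_pos P a) - s) \<notin> emb P"
    using assms(1) by (simp add: visible_south_def)
  ultimately show False
    using half_pos_refine_in_emb[OF assms(2)] by metis
qed

lemma west_step:
  assumes "adjacent p q" and "dir_of p q \<in> {East, West}" and "dir_of p q \<noteq> East"
  shows "q = (fst p - 1, snd p)"
  using assms by (cases p; cases q) (auto simp: dir_of_def adjacent_def split: if_splits)

lemma producible_path_walk:
  assumes "producible_path T glue str \<sigma> P"
  shows "P \<noteq> []" and "distinct (map fst P)" and "successively adjacent (map fst P)"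
  using assms unfolding producible_path_def is_path_def
  by (auto simp: successively_conv_nth interacts_def)

lemma easternmost_last:
  assumes "distinct (map fst P)" and "Suc j < length P"
    and "\<forall>b \<in> \<sigma> \<union> set P. b \<noteq> last P \<longrightarrow> fst (fst b) < fst (fst (last P))"
  shows "fst (map fst P ! j) < fst (last (map fst P))"
proof -
  have "map fst P ! j \<noteq> map fst P ! (length P - 1)"
    using nth_eq_iff_index_eq[OF assms(1), of j "length P - 1"] assms(2) by simp
  moreover have "P \<noteq> []"
    using assms(2) by auto
  ultimately have "P ! j \<noteq> last P"
    using assms(2) by (auto simp: last_conv_nth)
  then show ?thesis
    using assms(2,3) \<open>P \<noteq> []\<close> by (auto simp: last_map)
qed

theorem mainTheorem7:
  fixes T :: "'tt set" and glue :: "'tt \<Rightarrow> dir \<Rightarrow> 'g" and str :: "'g \<Rightarrow> nat"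
    and \<sigma> :: "'tt tile set" and P :: "'tt tile list"
  assumes "valid_tas T \<sigma>"
    and "producible_path T glue str \<sigma> P"
    and "\<forall>b \<in> \<sigma> \<union> set P. b \<noteq> last P \<longrightarrow> fst (fst b) < fst (fst (last P))"
  shows "(\<forall>a. visible_north \<sigma> P a \<longrightarrow> glue_dir P a = East) \<or>
         (\<forall>a. visible_south \<sigma> P a \<longrightarrow> glue_dir P a = East)"
proof (rule ccontr)
  assume "\<not> ?thesis"
  then obtain a b where north: "visible_north \<sigma> P a" "glue_dir P a \<noteq> East"
    and south: "visible_south \<sigma> P b" "glue_dir P b \<noteq> East"
    by blast
  note walk = producible_path_walk[OF assms(2)]
  have ab: "Suc a < length P" "Suc b < length P"
    using north south by (simp_all add: visible_north_def visible_south_def)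
  have "adjacent (fst (P ! a)) (fst (P ! Suc a))" "adjacent (fst (P ! b)) (fst (P ! Suc b))"
    using successively_nth[OF walk(3)] ab by simp_all
  then have "fst (P ! Suc a) = (fst (fst (P ! a)) - 1, snd (fst (P ! a)))"
    "fst (P ! Suc b) = (fst (fst (P ! b)) - 1, snd (fst (P ! b)))"
    using west_step north south by (simp_all add: visible_north_def visible_south_def glue_dir_def)
  then show False
    using no_west_glues_visible_north_south[of "map fst P" a b] walk(2,3) ab
      easternmost_last[OF walk(2) _ assms(3)] visible_north_refine[OF north(1)]
      visible_south_refine[OF south(1)]
    by simp
qed

end
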